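(* Let $X$ be a normed space with norm $\|\cdot\|$ and let $Y_\rho$ be a $\rho$-complete modular space associated with a convex modular $\rho$ satisfying the $\Delta_2$-condition with constant $\tau$ (i.e. $\rho(2u)\le\tau\rho(u)$ for all $u\in Y_\rho$). Let $\theta>0$ and $r>\log_2\!\left(\frac{\tau^3}{2}\right)$ be real numbers, and let $\phi: X\to Y_\rho$ be a mapping such that $$\rho\big(\phi(x+y-z)+\phi(x+z-y)+\phi(y+z-x)-\phi(x-y)-\phi(x-z)-\phi(z-y)-\phi(x)-\phi(y)-\phi(z)\big)\le\theta\left(\|x\|^r+\|y\|^r+\|z\|^r\right)$$ for all $x,y,z\in X$. Then there exists a unique quadratic mapping $h: X\to Y_\rho$ such that $$\rho(\phi(x)-h(x))\le\frac{3\theta\tau^2}{2\left(2^{r+1}-\tau^3\right)}\|x\|^r\quad\text{for all }x\in X.$$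
   Context: A convex modular on a vector space $Y$ is a functional $\rho: Y\to[0,\infty)$ such that for all $u,v\in Y$: (i) $\rho(u)=0$ iff $u=0$; (ii) $\rho(\lambda u)=\rho(u)$ for every scalar $\lambda$ with $|\lambda|=1$; (iii) $\rho(a u+b v)\le a\rho(u)+b\rho(v)$ whenever $a,b\ge 0$ and $a+b=1$. The associated modular space is $Y_\rho=\{u\in Y: \rho(\lambda u)\to 0 \text{ as } \lambda\to 0\}$. $\rho$ satisfies the $\Delta_2$-condition if there is $\tau>0$ with $\rho(2u)\le\tau\rho(u)$ for all $u\in Y_\rho$. A sequence $\{u_n\}$ in $Y_\rho$ is $\rho$-convergent to $u$ if $\rho(u_n-u)\to 0$; it is $\rho$-Cauchy if $\rho(u_n-u_m)\to0$ as $n,m\to\infty$; $Y_\rho$ is $\rho$-complete if every $\rho$-Cauchy sequence is $\rho$-convergent. A mapping $h: X\to Y_\rho$ is quadratic if $h(x+y)+h(x-y)=2h(x)+2h(y)$ for all $x,y\in X$. *)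

theory Defs
  imports "HOL-Analysis.Analysis"
begin

definition convex_modular :: "('b::real_vector \<Rightarrow> real) \<Rightarrow> bool" where
  "convex_modular \<rho> \<longleftrightarrow>
     (\<forall>u. 0 \<le> \<rho> u) \<and>
     (\<forall>u. \<rho> u = 0 \<longleftrightarrow> u = 0) \<and>
     (\<forall>u (l::real). \<bar>l\<bar> = 1 \<longrightarrow> \<rho> (l *\<^sub>R u) = \<rho> u) \<and>
     (\<forall>u v (a::real) b. 0 \<le> a \<and> 0 \<le> b \<and> a + b = 1 \<longrightarrow>
        \<rho> (a *\<^sub>R u + b *\<^sub>R v) \<le> a * \<rho> u + b * \<rho> v)"

definition modular_space :: "('b::real_vector \<Rightarrow> real) \<Rightarrow> 'b set" where
  "modular_space \<rho> = {u. ((\<lambda>l::real. \<rho> (l *\<^sub>R u)) \<longlongrightarrow> 0) (at 0)}"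

definition Delta2 :: "('b::real_vector \<Rightarrow> real) \<Rightarrow> real \<Rightarrow> bool" where
  "Delta2 \<rho> \<tau> \<longleftrightarrow> 0 < \<tau> \<and> (\<forall>u\<in>modular_space \<rho>. \<rho> (2 *\<^sub>R u) \<le> \<tau> * \<rho> u)"

definition rho_Cauchy :: "('b::real_vector \<Rightarrow> real) \<Rightarrow> (nat \<Rightarrow> 'b) \<Rightarrow> bool" where
  "rho_Cauchy \<rho> s \<longleftrightarrow> (\<forall>e>0. \<exists>N. \<forall>n\<ge>N. \<forall>m\<ge>N. \<rho> (s n - s m) < e)"

definition rho_converges :: "('b::real_vector \<Rightarrow> real) \<Rightarrow> (nat \<Rightarrow> 'b) \<Rightarrow> 'b \<Rightarrow> bool" where
  "rho_converges \<rho> s u \<longleftrightarrow> (\<lambda>n. \<rho> (s n - u)) \<longlonglongrightarrow> 0"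

definition rho_complete :: "('b::real_vector \<Rightarrow> real) \<Rightarrow> bool" where
  "rho_complete \<rho> \<longleftrightarrow>
     (\<forall>s. (\<forall>n. s n \<in> modular_space \<rho>) \<and> rho_Cauchy \<rho> s \<longrightarrow>
        (\<exists>u\<in>modular_space \<rho>. rho_converges \<rho> s u))"

definition quadratic_map :: "('a::real_vector \<Rightarrow> 'b::real_vector) \<Rightarrow> bool" where
  "quadratic_map h \<longleftrightarrow> (\<forall>x y. h (x + y) + h (x - y) = 2 *\<^sub>R h x + 2 *\<^sub>R h y)"

end

theory Submission
  imports Defs
begin

text \<open>Hyers' direct method, with convexity and the \<open>\<Delta>\<^sub>2\<close>-condition in place of the triangle
  inequality. Substituting \<open>(z, z, 0)\<close> and \<open>(z, 0, 0)\<close> shows that \<open>\<phi>(2z)\<close> is close to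
  \<open>4 \<phi>(z)\<close>, so \<open>h\<^sub>n(x) = 4\<^sup>n \<phi>(2\<^sup>-\<^sup>n x)\<close> is \<open>\<rho>\<close>-Cauchy: its telescoping sum is estimated by
  convexity, every doubling costing a factor \<open>\<tau>\<close>, and the resulting series converges because
  \<open>\<tau>\<^sup>3/2 < 2\<^sup>r\<close>. The \<open>\<rho>\<close>-limit has vanishing defect, hence is quadratic; it inherits the bound
  by lower semicontinuity of \<open>\<rho>\<close>; and two quadratic maps close to \<open>\<phi>\<close> coincide, since their
  difference at \<open>x\<close> is \<open>4\<^sup>n\<close> times their difference at \<open>2\<^sup>-\<^sup>n x\<close>.\<close>

lemma half_power_powr: "((1/2::real)^n) powr r = ((1/2) powr r)^n"
proof -
  have "((1/2::real)^n) powr r = ((1/2) powr real n) powr r" by (simp add: powr_realpow)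
  also have "\<dots> = ((1/2) powr r) powr real n" by (simp add: powr_powr mult.commute)
  also have "\<dots> = ((1/2) powr r)^n" by (simp add: powr_realpow)
  finally show ?thesis .
qed

locale Delta2_modular =
  fixes \<rho> :: "'b::real_vector \<Rightarrow> real" and \<tau> :: real
  assumes convex_modular: "convex_modular \<rho>" and Delta2: "Delta2 \<rho> \<tau>"
begin

lemma nonneg: "0 \<le> \<rho> u"
  using convex_modular unfolding convex_modular_def by auto

lemma eq_0_iff: "\<rho> u = 0 \<longleftrightarrow> u = 0"
  using convex_modular unfolding convex_modular_def by auto

lemma zero [simp]: "\<rho> 0 = 0"
  using eq_0_iff by auto

lemma minus [simp]: "\<rho> (- u) = \<rho> u"
proof -
  have "\<rho> ((-1::real) *\<^sub>R u) = \<rho> u"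
    using convex_modular unfolding convex_modular_def by (metis abs_minus_cancel abs_one)
  thus ?thesis by simp
qed

lemma minus_commute: "\<rho> (u - v) = \<rho> (v - u)"
  using minus[of "v - u"] by simp

lemma convex:
  "0 \<le> a \<Longrightarrow> 0 \<le> b \<Longrightarrow> a + b = 1 \<Longrightarrow> \<rho> (a *\<^sub>R u + b *\<^sub>R v) \<le> a * \<rho> u + b * \<rho> v"
  using convex_modular unfolding convex_modular_def by blast

lemma scaleR_le: "0 \<le> t \<Longrightarrow> t \<le> 1 \<Longrightarrow> \<rho> (t *\<^sub>R u) \<le> t * \<rho> u"
  using convex[of t "1 - t" u 0] by simp

lemma scaleR_abs_le: "\<bar>l\<bar> \<le> 1 \<Longrightarrow> \<rho> (l *\<^sub>R u) \<le> \<bar>l\<bar> * \<rho> u"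
  using scaleR_le[of "\<bar>l\<bar>" u] minus[of "l *\<^sub>R u"] by (cases "l \<ge> 0") auto

lemma modular_space_eq_UNIV: "modular_space \<rho> = UNIV"
proof -
  have "((\<lambda>l::real. \<rho> (l *\<^sub>R u)) \<longlongrightarrow> 0) (at 0)" for u
  proof (rule tendsto_sandwich[where f="\<lambda>_. 0" and h="\<lambda>l. \<bar>l\<bar> * \<rho> u"])
    have "\<forall>\<^sub>F l in at (0::real). \<bar>l\<bar> < 1"
      unfolding eventually_at by (intro exI[of _ 1]) (auto simp: dist_real_def)
    thus "\<forall>\<^sub>F l in at 0. \<rho> (l *\<^sub>R u) \<le> \<bar>l\<bar> * \<rho> u"
      by eventually_elim (simp add: scaleR_abs_le)
    show "((\<lambda>l. \<bar>l\<bar> * \<rho> u) \<longlongrightarrow> 0) (at 0)"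
      by (auto intro!: tendsto_eq_intros)
  qed (simp_all add: nonneg)
  thus ?thesis unfolding modular_space_def by auto
qed

lemma tau_pos: "0 < \<tau>"
  using Delta2 unfolding Delta2_def by auto

lemma double_le: "\<rho> (2 *\<^sub>R u) \<le> \<tau> * \<rho> u"
  using Delta2 modular_space_eq_UNIV unfolding Delta2_def by auto

lemma two_le_tau_if_ne_zero:
  fixes u :: 'b
  assumes "u \<noteq> 0"
  shows "2 \<le> \<tau>"
proof -
  have "\<rho> u = \<rho> ((1/2) *\<^sub>R (2 *\<^sub>R u))" by simp
  also have "\<dots> \<le> 1/2 * \<rho> (2 *\<^sub>R u)" by (rule scaleR_le) auto
  also have "\<dots> \<le> 1/2 * (\<tau> * \<rho> u)" using double_le[of u] by simp
  finally show ?thesis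
    using nonneg[of u] eq_0_iff[of u] assms by (simp add: field_simps)
qed

lemma scaleR_power2_le: "\<rho> ((2^k) *\<^sub>R u) \<le> \<tau>^k * \<rho> u"
proof (induction k)
  case (Suc k)
  have "\<rho> ((2^Suc k) *\<^sub>R u) = \<rho> (2 *\<^sub>R ((2^k) *\<^sub>R u))" by simp
  also have "\<dots> \<le> \<tau> * \<rho> ((2^k) *\<^sub>R u)" by (rule double_le)
  also have "\<dots> \<le> \<tau> * (\<tau>^k * \<rho> u)" using Suc tau_pos by simp
  finally show ?case by simp
qed simp

lemma scaleR_power4_le: "\<rho> ((4^k) *\<^sub>R u) \<le> (\<tau>^2)^k * \<rho> u"
  using scaleR_power2_le[of "2*k" u] by (simp add: power_mult)

lemma add_le: "\<rho> (u + v) \<le> \<tau> / 2 * (\<rho> u + \<rho> v)"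
proof -
  have "\<rho> (u + v) = \<rho> ((1/2) *\<^sub>R (2 *\<^sub>R u) + (1/2) *\<^sub>R (2 *\<^sub>R v))" by simp
  also have "\<dots> \<le> 1/2 * \<rho> (2 *\<^sub>R u) + 1/2 * \<rho> (2 *\<^sub>R v)" by (rule convex) auto
  also have "\<dots> \<le> 1/2 * (\<tau> * \<rho> u) + 1/2 * (\<tau> * \<rho> v)"
    using double_le[of u] double_le[of v] by linarith
  finally show ?thesis by (simp add: algebra_simps)
qed

lemma sum_le: "\<rho> (\<Sum>i<n. u i) \<le> (\<Sum>i<n. (1/2)^(i+1) * \<rho> ((2^(i+1)) *\<^sub>R u i))"
proof (induction n arbitrary: u)
  case (Suc n)
  have IH: "\<rho> (\<Sum>i<n. 2 *\<^sub>R u (Suc i))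
      \<le> (\<Sum>i<n. (1/2)^(i+1) * \<rho> ((2^(i+1)) *\<^sub>R (2 *\<^sub>R u (Suc i))))"
    using Suc.IH[of "\<lambda>i. 2 *\<^sub>R u (Suc i)"] .
  have "\<rho> (\<Sum>i<Suc n. u i)
      = \<rho> ((1/2) *\<^sub>R (2 *\<^sub>R u 0) + (1/2) *\<^sub>R (\<Sum>i<n. 2 *\<^sub>R u (Suc i)))"
    unfolding sum.lessThan_Suc_shift by (simp add: scaleR_sum_right[symmetric])
  also have "\<dots> \<le> 1/2 * \<rho> (2 *\<^sub>R u 0) + 1/2 * \<rho> (\<Sum>i<n. 2 *\<^sub>R u (Suc i))"
    by (rule convex) auto
  also have "\<dots> \<le> (\<Sum>i<Suc n. (1/2)^(i+1) * \<rho> ((2^(i+1)) *\<^sub>R u i))"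
    using IH unfolding sum.lessThan_Suc_shift by (simp add: sum_distrib_left algebra_simps)
  finally show ?case .
qed simp

lemma converges_by_bound:
  assumes "\<And>n. \<rho> (s n - u) \<le> g n" and "g \<longlonglongrightarrow> 0"
  shows "rho_converges \<rho> s u"
  unfolding rho_converges_def
  by (rule tendsto_sandwich[OF _ _ tendsto_const assms(2)]) (auto simp: nonneg assms(1))

lemma converges_add:
  assumes "rho_converges \<rho> s u" and "rho_converges \<rho> t v"
  shows "rho_converges \<rho> (\<lambda>n. s n + t n) (u + v)"
proof (rule converges_by_bound)
  show "\<rho> (s n + t n - (u + v)) \<le> \<tau>/2 * (\<rho> (s n - u) + \<rho> (t n - v))" for n
    using add_le[of "s n - u" "t n - v"] by (simp add: algebra_simps)
  show "(\<lambda>n. \<tau>/2 * (\<rho> (s n - u) + \<rho> (t n - v))) \<longlonglongrightarrow> 0"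
    using assms unfolding rho_converges_def by (auto intro!: tendsto_eq_intros)
qed

lemma converges_minus: "rho_converges \<rho> s u \<Longrightarrow> rho_converges \<rho> (\<lambda>n. - s n) (- u)"
  unfolding rho_converges_def using minus[of "s _ - u"] by simp

lemma converges_diff:
  "rho_converges \<rho> s u \<Longrightarrow> rho_converges \<rho> t v \<Longrightarrow> rho_converges \<rho> (\<lambda>n. s n - t n) (u - v)"
  using converges_add[of s u "\<lambda>n. - t n" "- v"] converges_minus[of t v] by simp

lemma converges_unique:
  assumes "rho_converges \<rho> s u" and "rho_converges \<rho> s v"
  shows "u = v"
proof -
  have "rho_converges \<rho> (\<lambda>n. s n - s n) (u - v)"
    using converges_diff[OF assms] .
  hence "\<rho> (v - u) = 0"
    unfolding rho_converges_def using minus_commute[of v u] by (simp add: LIMSEQ_const_iff)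
  thus ?thesis using eq_0_iff by simp
qed

text \<open>Lower semicontinuity of \<open>\<rho>\<close> along \<open>\<rho>\<close>-convergent sequences: write \<open>b\<close> as the convex
  combination \<open>(1 - e) (a/(1 - e)) + e ((b - a)/e)\<close> with \<open>e = 2\<^sup>-\<^sup>k\<close>, and \<open>a/(1 - e)\<close> in turn as a
  convex combination of \<open>a\<close> and \<open>2a\<close>.\<close>

lemma scaleR_inverse_one_minus_le:
  assumes "0 \<le> e" "e \<le> 1/2"
  shows "(1 - e) * \<rho> ((1 / (1 - e)) *\<^sub>R u) \<le> (1 - 2*e + e * \<tau>) * \<rho> u"
proof -
  have "(1 / (1 - e)) *\<^sub>R u = ((1 - 2*e) / (1 - e)) *\<^sub>R u + (e / (1 - e)) *\<^sub>R (2 *\<^sub>R u)"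
    using assms by (simp add: scaleR_left_distrib[symmetric] field_simps)
  also have "\<rho> \<dots> \<le> (1 - 2*e) / (1 - e) * \<rho> u + e / (1 - e) * \<rho> (2 *\<^sub>R u)"
    using assms by (intro convex) (auto simp: add_divide_distrib[symmetric])
  also have "\<dots> \<le> (1 - 2*e) / (1 - e) * \<rho> u + e / (1 - e) * (\<tau> * \<rho> u)"
    using double_le[of u] assms by (intro add_left_mono mult_left_mono) auto
  also have "\<dots> = (1 - 2*e + e * \<tau>) * \<rho> u / (1 - e)"
    by (simp add: add_divide_distrib[symmetric] algebra_simps)
  finally show ?thesis
    using assms by (simp add: pos_le_divide_eq mult.commute)
qed

lemma le_of_converges:
  assumes conv: "rho_converges \<rho> a b" and bound: "\<And>n. \<rho> (a n) \<le> M"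
  shows "\<rho> b \<le> M"
proof -
  have M_nonneg: "0 \<le> M" using bound[of 0] nonneg[of "a 0"] by linarith
  have approx: "\<rho> b \<le> (1 - 2*e + e * \<tau>) * M" if e: "e = (1/2)^Suc k" for e k
  proof -
    have e_pos: "0 < e" and e_le: "e \<le> 1/2"
      unfolding e by (simp_all add: power_le_one)
    have "\<rho> b \<le> (1 - 2*e + e * \<tau>) * M + e * (\<tau>^Suc k * \<rho> (a n - b))" for n
    proof -
      have "e * 2^Suc k = 1" unfolding e by (simp add: power_one_over)
      hence "b = (1 - e) *\<^sub>R ((1 / (1 - e)) *\<^sub>R a n) + e *\<^sub>R ((2^Suc k) *\<^sub>R (b - a n))"
        using e_le by simp
      moreover have "\<rho> ((1 - e) *\<^sub>R ((1 / (1 - e)) *\<^sub>R a n) + e *\<^sub>R ((2^Suc k) *\<^sub>R (b - a n)))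
          \<le> (1 - e) * \<rho> ((1 / (1 - e)) *\<^sub>R a n) + e * \<rho> ((2^Suc k) *\<^sub>R (b - a n))"
        using e_pos e_le by (intro convex) auto
      ultimately have "\<rho> b \<le> (1 - e) * \<rho> ((1 / (1 - e)) *\<^sub>R a n) + e * \<rho> ((2^Suc k) *\<^sub>R (b - a n))"
        by simp
      also have "\<dots> \<le> (1 - 2*e + e * \<tau>) * \<rho> (a n) + e * (\<tau>^Suc k * \<rho> (a n - b))"
        using scaleR_inverse_one_minus_le[of e "a n"] scaleR_power2_le[of "Suc k" "b - a n"]
          e_pos e_le minus_commute[of "a n" b] by (intro add_mono mult_left_mono) auto
      also have "\<dots> \<le> (1 - 2*e + e * \<tau>) * M + e * (\<tau>^Suc k * \<rho> (a n - b))"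
        using bound[of n] e_pos e_le tau_pos by (intro add_right_mono mult_left_mono) auto
      finally show ?thesis .
    qed
    moreover have "(\<lambda>n. (1 - 2*e + e * \<tau>) * M + e * (\<tau>^Suc k * \<rho> (a n - b)))
        \<longlonglongrightarrow> (1 - 2*e + e * \<tau>) * M + e * (\<tau>^Suc k * 0)"
      using conv unfolding rho_converges_def by (intro tendsto_intros)
    ultimately show ?thesis by (intro LIMSEQ_le_const) auto
  qed
  have "(\<lambda>k. (1 - 2 * (1/2)^Suc k + (1/2)^Suc k * \<tau>) * M) \<longlonglongrightarrow> (1 - 2 * 0 + 0 * \<tau>) * M"
    by (intro tendsto_intros LIMSEQ_Suc LIMSEQ_power_zero) auto
  thus ?thesis using approx[OF refl] by (intro LIMSEQ_le_const) auto
qed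

end

definition quadratic_defect :: "('a::real_vector \<Rightarrow> 'b::real_vector) \<Rightarrow> 'a \<Rightarrow> 'a \<Rightarrow> 'a \<Rightarrow> 'b"
  where "quadratic_defect f x y z = f (x + y - z) + f (x + z - y) + f (y + z - x)
    - f (x - y) - f (x - z) - f (z - y) - f x - f y - f z"

lemma scaleR_3: "(3::real) *\<^sub>R (v::'a::real_vector) = v + v + v"
  using scaleR_add_left[of 2 1 v] by (simp add: scaleR_2)

lemma scaleR_4: "(4::real) *\<^sub>R (v::'a::real_vector) = v + v + v + v"
  using scaleR_add_left[of 3 1 v] by (simp add: scaleR_3)

lemma quadratic_defect_000: "quadratic_defect f 0 0 0 = - (3 *\<^sub>R f 0)"
  unfolding quadratic_defect_def scaleR_3 by (simp add: algebra_simps)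

lemma quadratic_map_if_defect_eq_0:
  assumes defect: "\<And>x y z. quadratic_defect f x y z = 0"
  shows "quadratic_map f"
proof -
  have f0: "f 0 = 0" using defect[of 0 0 0] quadratic_defect_000[of f] by simp
  have even: "f (- x) = f x" for x
  proof -
    have "quadratic_defect f x 0 0 = f (-x) - f x"
      unfolding quadratic_defect_def by (simp add: f0 algebra_simps)
    thus ?thesis using defect[of x 0 0] by simp
  qed
  show ?thesis unfolding quadratic_map_def
  proof (intro allI)
    fix x y
    have "quadratic_defect f x y 0 = f (x + y) + f (x - y) - (f x + f x + f y + f y)"
      unfolding quadratic_defect_def using even[of "x - y"] even[of y]
      by (simp add: f0 algebra_simps)
    thus "f (x + y) + f (x - y) = 2 *\<^sub>R f x + 2 *\<^sub>R f y"
      using defect[of x y 0] by (simp add: scaleR_2 algebra_simps)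
  qed
qed

lemma quadratic_map_zero:
  assumes "quadratic_map g" shows "g 0 = 0"
proof -
  have "g 0 + g 0 = 2 *\<^sub>R g 0 + 2 *\<^sub>R g 0"
    using assms[unfolded quadratic_map_def, rule_format, of 0 0] by simp
  hence "2 *\<^sub>R g 0 = 0" by (simp add: scaleR_2)
  thus ?thesis by simp
qed

lemma quadratic_map_double:
  assumes "quadratic_map g" shows "g (2 *\<^sub>R u) = 4 *\<^sub>R g u"
proof -
  have "g (u + u) + g (u - u) = 2 *\<^sub>R g u + 2 *\<^sub>R g u"
    using assms unfolding quadratic_map_def by blast
  thus ?thesis using quadratic_map_zero[OF assms] by (simp add: scaleR_2 scaleR_4)
qed

lemma quadratic_map_eq_scaleR_half_power:
  assumes "quadratic_map g"
  shows "g x = (4^n) *\<^sub>R g ((1/2::real)^n *\<^sub>R x)"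
proof (induction n)
  case (Suc n)
  have "(1/2::real)^n *\<^sub>R x = 2 *\<^sub>R ((1/2::real)^Suc n *\<^sub>R x)" by simp
  hence "g ((1/2::real)^n *\<^sub>R x) = 4 *\<^sub>R g ((1/2::real)^Suc n *\<^sub>R x)"
    using quadratic_map_double[OF assms] by metis
  with Suc show ?case by (simp add: mult.commute)
qed simp

lemma sum_power_le_inverse:
  fixes q :: real
  assumes "0 \<le> q" "q < 1"
  shows "(\<Sum>i<k. q^i) \<le> 1 / (1 - q)"
proof -
  have "(\<Sum>i<k. q^i) = (1 - q^k) / (1 - q)" using assms sum_gp_strict[of q k] by simp
  also have "\<dots> \<le> 1 / (1 - q)" using assms by (intro divide_right_mono) auto
  finally show ?thesis .
qed

locale quadratic_stability = Delta2_modular \<rho> \<tau> for \<rho> :: "'b::real_vector \<Rightarrow> real" and \<tau> +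
  fixes \<phi> :: "'a::real_normed_vector \<Rightarrow> 'b" and \<theta> r :: real
  assumes complete: "rho_complete \<rho>"
    and theta_pos: "0 < \<theta>"
    and r_large: "\<tau>^3 / 2 < 2 powr r"
    and two_le_tau: "2 \<le> \<tau>" \<comment> \<open>automatic unless \<open>'b\<close> is trivial\<close>
    and defect_le: "\<And>x y z. \<rho> (quadratic_defect \<phi> x y z)
      \<le> \<theta> * (norm x powr r + norm y powr r + norm z powr r)"
begin

definition c :: real where "c = (1/2) powr r"

definition B :: real where "B = 3 * \<theta> * \<tau>\<^sup>2 / (2 * (2 powr (r + 1) - \<tau> ^ 3))"

definition hyers :: "nat \<Rightarrow> 'a \<Rightarrow> 'b"
  where "hyers n x = (4^n) *\<^sub>R \<phi> ((1/2::real)^n *\<^sub>R x)"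

lemma c_pos: "0 < c"
  unfolding c_def by simp

lemma c_eq: "c = 1 / 2 powr r"
  unfolding c_def by (simp add: powr_divide)

lemma tau3_c_less_2: "\<tau>^3 * c / 2 < 1"
  using r_large unfolding c_eq by (simp add: field_simps)

lemma tau2_c_less_1: "\<tau>^2 * c < 1"
proof -
  have "\<tau>^2 * c * 2 \<le> \<tau>^2 * c * \<tau>" using two_le_tau c_pos by (intro mult_left_mono) auto
  thus ?thesis using tau3_c_less_2 by (simp add: power3_eq_cube power2_eq_square algebra_simps)
qed

lemma norm_half_power_powr: "norm ((1/2::real)^n *\<^sub>R x) powr r = c^n * norm x powr r"
  unfolding c_def by (simp add: powr_mult half_power_powr)

lemma phi_zero: "\<phi> 0 = 0"
  using defect_le[of 0 0 0] nonneg[of "quadratic_defect \<phi> 0 0 0"] eq_0_iff[of "3 *\<^sub>R \<phi> 0"]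
  by (simp add: quadratic_defect_000)

lemma phi_double_le: "\<rho> (\<phi> (2 *\<^sub>R z) - 4 *\<^sub>R \<phi> z) \<le> 3/2 * \<tau> * \<theta> * norm z powr r"
proof -
  have "\<phi> (2 *\<^sub>R z) - 4 *\<^sub>R \<phi> z = quadratic_defect \<phi> z z 0 + quadratic_defect \<phi> z 0 0"
    unfolding quadratic_defect_def scaleR_4 scaleR_2 by (simp add: phi_zero algebra_simps)
  hence "\<rho> (\<phi> (2 *\<^sub>R z) - 4 *\<^sub>R \<phi> z)
      \<le> \<tau>/2 * (\<rho> (quadratic_defect \<phi> z z 0) + \<rho> (quadratic_defect \<phi> z 0 0))"
    using add_le by simp
  also have "\<dots> \<le> \<tau>/2 * (2 * \<theta> * norm z powr r + \<theta> * norm z powr r)"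
    using defect_le[of z z 0] defect_le[of z 0 0] tau_pos by (intro mult_left_mono) auto
  finally show ?thesis by (simp add: algebra_simps)
qed

lemma hyers_0 [simp]: "hyers 0 x = \<phi> x"
  unfolding hyers_def by simp

lemma hyers_Suc_diff_le:
  "(1/2)^(i+1) * \<rho> ((2^(i+1)) *\<^sub>R (hyers (Suc i) x - hyers i x))
    \<le> 3/4 * \<theta> * \<tau>^2 * c * norm x powr r * (\<tau>^3 * c / 2)^i"
proof -
  define z where "z = (1/2::real)^Suc i *\<^sub>R x"
  define w where "w = \<phi> (2 *\<^sub>R z) - 4 *\<^sub>R \<phi> z"
  have diff: "hyers (Suc i) x - hyers i x = - ((4^i) *\<^sub>R w)"
    unfolding hyers_def w_def z_def by (simp add: scaleR_right_diff_distrib)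
  have powers: "(2::real)^(i+1) * 4^i = 2^(3*i+1)"
    by (simp add: power_add power_mult flip: power_mult_distrib)
  have "\<rho> ((2^(i+1)) *\<^sub>R (hyers (Suc i) x - hyers i x)) = \<rho> ((2^(3*i+1)) *\<^sub>R w)"
    unfolding diff scaleR_minus_right scaleR_scaleR powers minus by (rule refl)
  also have "\<dots> \<le> \<tau>^(3*i+1) * \<rho> w"
    by (rule scaleR_power2_le)
  also have "\<dots> \<le> \<tau>^(3*i+1) * (3/2 * \<tau> * \<theta> * (c^Suc i * norm x powr r))"
    using phi_double_le[of z] tau_pos unfolding w_def z_def norm_half_power_powr
    by (intro mult_left_mono) auto
  finally have "(1/2)^(i+1) * \<rho> ((2^(i+1)) *\<^sub>R (hyers (Suc i) x - hyers i x))
      \<le> (1/2)^(i+1) * (\<tau>^(3*i+1) * (3/2 * \<tau> * \<theta> * (c^Suc i * norm x powr r)))"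
    by (intro mult_left_mono) auto
  also have "\<dots> = 3/4 * \<theta> * \<tau>^2 * c * norm x powr r * (\<tau>^3 * c / 2)^i"
    by (simp add: power_add power_mult power_mult_distrib power_divide field_simps
        power2_eq_square flip: power_mult)
  finally show ?thesis .
qed

lemma B_eq: "3/4 * \<theta> * \<tau>^2 * c / (1 - \<tau>^3 * c / 2) = B"
proof -
  have "0 < 2 * 2 powr r - \<tau>^3" using r_large by simp
  thus ?thesis unfolding B_def c_eq by (simp add: powr_add field_simps)
qed

lemma hyers_minus_phi_le: "\<rho> (hyers k x - \<phi> x) \<le> B * norm x powr r"
proof -
  define q where "q = \<tau>^3 * c / 2"
  define K where "K = 3/4 * \<theta> * \<tau>^2 * c * norm x powr r"
  have "hyers k x - \<phi> x = (\<Sum>i<k. hyers (Suc i) x - hyers i x)"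
    using sum_lessThan_telescope[of "\<lambda>i. hyers i x" k] by simp
  hence "\<rho> (hyers k x - \<phi> x)
      \<le> (\<Sum>i<k. (1/2)^(i+1) * \<rho> ((2^(i+1)) *\<^sub>R (hyers (Suc i) x - hyers i x)))"
    using sum_le by simp
  also have "\<dots> \<le> (\<Sum>i<k. K * q^i)"
    unfolding K_def q_def by (rule sum_mono) (rule hyers_Suc_diff_le)
  also have "\<dots> = K * (\<Sum>i<k. q^i)"
    by (simp add: sum_distrib_left)
  also have "\<dots> \<le> K * (1 / (1 - q))"
    using sum_power_le_inverse[of q k] tau3_c_less_2 c_pos tau_pos theta_pos
    unfolding K_def q_def by (intro mult_left_mono) auto
  also have "\<dots> = B * norm x powr r"
    using tau3_c_less_2 unfolding K_def q_def B_eq[symmetric] by simp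
  finally show ?thesis .
qed

lemma hyers_diff:
  assumes "n \<le> m"
  shows "hyers m x - hyers n x
    = (4^n) *\<^sub>R (hyers (m - n) ((1/2::real)^n *\<^sub>R x) - \<phi> ((1/2::real)^n *\<^sub>R x))"
proof -
  obtain d where "m = n + d" using assms le_Suc_ex by blast
  thus ?thesis unfolding hyers_def by (simp add: power_add scaleR_right_diff_distrib mult.commute)
qed

lemma hyers_diff_le:
  assumes "n \<le> m"
  shows "\<rho> (hyers m x - hyers n x) \<le> B * norm x powr r * (\<tau>^2 * c)^n"
proof -
  let ?y = "(1/2::real)^n *\<^sub>R x"
  have "\<rho> (hyers m x - hyers n x) \<le> (\<tau>^2)^n * \<rho> (hyers (m - n) ?y - \<phi> ?y)"
    unfolding hyers_diff[OF assms] by (rule scaleR_power4_le)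
  also have "\<dots> \<le> (\<tau>^2)^n * (B * (c^n * norm x powr r))"
    using hyers_minus_phi_le[of "m - n" ?y] tau_pos
    unfolding norm_half_power_powr by (intro mult_left_mono) auto
  finally show ?thesis by (simp add: power_mult_distrib mult_ac)
qed

lemma geometric_tendsto_0: "(\<lambda>n. K * (\<tau>^2 * c)^n) \<longlonglongrightarrow> 0"
  using tendsto_mult_right_zero[OF LIMSEQ_power_zero[of "\<tau>^2 * c"]] tau2_c_less_1 c_pos
  by simp

lemma hyers_Cauchy: "rho_Cauchy \<rho> (\<lambda>n. hyers n x)"
  unfolding rho_Cauchy_def
proof (intro allI impI)
  fix e :: real assume "e > 0"
  then obtain N where N: "\<And>n. n \<ge> N \<Longrightarrow> B * norm x powr r * (\<tau>^2 * c)^n < e"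
    using order_tendstoD(2)[OF geometric_tendsto_0[of "B * norm x powr r"]]
    unfolding eventually_sequentially by blast
  have close: "\<rho> (hyers n x - hyers m x) < e" if "m \<le> n" "m \<ge> N" for m n
    using hyers_diff_le[OF that(1), of x] N[OF that(2)] by linarith
  show "\<exists>N. \<forall>n\<ge>N. \<forall>m\<ge>N. \<rho> (hyers n x - hyers m x) < e"
  proof (intro exI allI impI)
    fix n m assume "n \<ge> N" "m \<ge> N"
    show "\<rho> (hyers n x - hyers m x) < e"
      using close[of m n] close[of n m] minus_commute[of "hyers n x" "hyers m x"] \<open>n \<ge> N\<close> \<open>m \<ge> N\<close>
      by (cases "m \<le> n") auto
  qed
qed

definition hyers_limit :: "'a \<Rightarrow> 'b"
  where "hyers_limit x = (SOME u. rho_converges \<rho> (\<lambda>n. hyers n x) u)"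

lemma hyers_converges: "rho_converges \<rho> (\<lambda>n. hyers n x) (hyers_limit x)"
proof -
  have "\<exists>u. rho_converges \<rho> (\<lambda>n. hyers n x) u"
    using complete hyers_Cauchy[of x] modular_space_eq_UNIV unfolding rho_complete_def by blast
  thus ?thesis unfolding hyers_limit_def by (rule someI_ex)
qed

lemma phi_minus_hyers_limit_le: "\<rho> (\<phi> x - hyers_limit x) \<le> B * norm x powr r"
proof (rule le_of_converges)
  have "rho_converges \<rho> (\<lambda>n. \<phi> x) (\<phi> x)"
    unfolding rho_converges_def by simp
  thus "rho_converges \<rho> (\<lambda>n. \<phi> x - hyers n x) (\<phi> x - hyers_limit x)"
    using converges_diff hyers_converges by blast
  show "\<rho> (\<phi> x - hyers n x) \<le> B * norm x powr r" for n
    using hyers_minus_phi_le[of n x] minus_commute by simp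
qed

lemma hyers_defect_converges_0: "rho_converges \<rho> (\<lambda>n. quadratic_defect (hyers n) x y z) 0"
proof (rule converges_by_bound)
  let ?N = "norm x powr r + norm y powr r + norm z powr r"
  show "(\<lambda>n. \<theta> * ?N * (\<tau>^2 * c)^n) \<longlonglongrightarrow> 0"
    by (rule geometric_tendsto_0)
  have "quadratic_defect (hyers n) x y z
      = (4^n) *\<^sub>R quadratic_defect \<phi> ((1/2::real)^n *\<^sub>R x) ((1/2::real)^n *\<^sub>R y)
        ((1/2::real)^n *\<^sub>R z)" for n
    unfolding quadratic_defect_def hyers_def
    by (simp add: scaleR_right_diff_distrib scaleR_add_right)
  hence "\<rho> (quadratic_defect (hyers n) x y z)
      \<le> (\<tau>^2)^n * \<rho> (quadratic_defect \<phi> ((1/2::real)^n *\<^sub>R x) ((1/2::real)^n *\<^sub>R y)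
        ((1/2::real)^n *\<^sub>R z))" for n
    using scaleR_power4_le by simp
  also have "\<dots> n \<le> (\<tau>^2)^n * (\<theta> * (c^n * ?N))" for n
    using defect_le[of "(1/2::real)^n *\<^sub>R x" "(1/2::real)^n *\<^sub>R y" "(1/2::real)^n *\<^sub>R z"] tau_pos
    unfolding norm_half_power_powr by (intro mult_left_mono) (auto simp: distrib_left)
  finally show "\<rho> (quadratic_defect (hyers n) x y z - 0) \<le> \<theta> * ?N * (\<tau>^2 * c)^n" for n
    by (simp add: power_mult_distrib mult_ac)
qed

lemma quadratic_hyers_limit: "quadratic_map hyers_limit"
proof (rule quadratic_map_if_defect_eq_0)
  fix x y z
  have "rho_converges \<rho> (\<lambda>n. quadratic_defect (hyers n) x y z) (quadratic_defect hyers_limit x y z)"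
    unfolding quadratic_defect_def by (intro converges_add converges_diff hyers_converges)
  thus "quadratic_defect hyers_limit x y z = 0"
    using hyers_defect_converges_0 converges_unique by blast
qed

lemma quadratic_approximation_unique:
  assumes g1: "quadratic_map g1" and g2: "quadratic_map g2"
    and close1: "\<And>x. \<rho> (\<phi> x - g1 x) \<le> M * norm x powr r"
    and close2: "\<And>x. \<rho> (\<phi> x - g2 x) \<le> M * norm x powr r"
  shows "g1 = g2"
proof
  fix x
  have "rho_converges \<rho> (\<lambda>n. g1 x - g2 x) 0"
  proof (rule converges_by_bound)
    show "(\<lambda>n. \<tau> * M * norm x powr r * (\<tau>^2 * c)^n) \<longlonglongrightarrow> 0"
      by (rule geometric_tendsto_0)
    fix n
    define y where "y = (1/2::real)^n *\<^sub>R x"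
    have "g1 x - g2 x = (4^n) *\<^sub>R ((g1 y - \<phi> y) + (\<phi> y - g2 y))"
      using quadratic_map_eq_scaleR_half_power[OF g1, of x n]
        quadratic_map_eq_scaleR_half_power[OF g2, of x n]
      unfolding y_def by (simp add: scaleR_right_diff_distrib)
    hence "\<rho> (g1 x - g2 x - 0) \<le> (\<tau>^2)^n * \<rho> ((g1 y - \<phi> y) + (\<phi> y - g2 y))"
      using scaleR_power4_le by simp
    also have "\<dots> \<le> (\<tau>^2)^n * (\<tau>/2 * (\<rho> (g1 y - \<phi> y) + \<rho> (\<phi> y - g2 y)))"
      by (rule mult_left_mono[OF add_le]) simp
    also have "\<dots> \<le> (\<tau>^2)^n * (\<tau>/2 * (M * (c^n * norm x powr r) + M * (c^n * norm x powr r)))"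
      using close1[of y] close2[of y] minus_commute[of "g1 y"] tau_pos
      unfolding y_def norm_half_power_powr by (intro mult_left_mono add_mono) auto
    also have "\<dots> = \<tau> * M * norm x powr r * (\<tau>^2 * c)^n"
      by (simp add: power_mult_distrib algebra_simps)
    finally show "\<rho> (g1 x - g2 x - 0) \<le> \<tau> * M * norm x powr r * (\<tau>^2 * c)^n" .
  qed
  moreover have "rho_converges \<rho> (\<lambda>n. g1 x - g2 x) (g1 x - g2 x)"
    unfolding rho_converges_def by simp
  ultimately show "g1 x = g2 x"
    using converges_unique by fastforce
qed

theorem ex1_quadratic_approximation:
  "\<exists>!h. (\<forall>x. h x \<in> modular_space \<rho>) \<and> quadratic_map h \<and>
     (\<forall>x. \<rho> (\<phi> x - h x) \<le> B * norm x powr r)"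
  using quadratic_hyers_limit phi_minus_hyers_limit_le quadratic_approximation_unique
    modular_space_eq_UNIV
  by (intro ex1I[of _ hyers_limit]) auto

end

theorem corollary3p2:
  fixes \<rho> :: "'b::real_vector \<Rightarrow> real"
    and \<phi> :: "'a::real_normed_vector \<Rightarrow> 'b"
    and \<tau> \<theta> r :: real
  assumes "convex_modular \<rho>"
    and "rho_complete \<rho>"
    and "Delta2 \<rho> \<tau>"
    and "\<theta> > 0"
    and "r > log 2 (\<tau> ^ 3 / 2)"
    and "\<forall>x. \<phi> x \<in> modular_space \<rho>"
    and "\<forall>x y z. \<rho> (\<phi> (x + y - z) + \<phi> (x + z - y) + \<phi> (y + z - x) - \<phi> (x - y) - \<phi> (x - z)
                 - \<phi> (z - y) - \<phi> x - \<phi> y - \<phi> z)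
               \<le> \<theta> * (norm x powr r + norm y powr r + norm z powr r)"
  shows "\<exists>!h. (\<forall>x. h x \<in> modular_space \<rho>) \<and> quadratic_map h \<and>
           (\<forall>x. \<rho> (\<phi> x - h x) \<le> 3 * \<theta> * \<tau>\<^sup>2 / (2 * (2 powr (r + 1) - \<tau> ^ 3)) * norm x powr r)"
proof -
  interpret Delta2_modular \<rho> \<tau> using assms(1,3) by unfold_locales
  have r_large: "\<tau>^3 / 2 < 2 powr r"
    using assms(5) tau_pos by (subst (asm) log_less_iff) auto
  show ?thesis
  proof (cases "\<exists>u::'b. u \<noteq> 0")
    case True
    interpret quadratic_stability \<rho> \<tau> \<phi> \<theta> r
      using assms(2,4,7) r_large True two_le_tau_if_ne_zero
      by unfold_locales (auto simp: quadratic_defect_def)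
    show ?thesis using ex1_quadratic_approximation unfolding B_def .
  next
    case False
    have "0 < 2 powr (r + 1) - \<tau> ^ 3" using r_large by (simp add: powr_add)
    hence "0 \<le> 3 * \<theta> * \<tau>\<^sup>2 / (2 * (2 powr (r + 1) - \<tau> ^ 3)) * norm x powr r" for x :: 'a
      using assms(4) by simp
    moreover have "\<phi> x - 0 = 0" for x using False by blast
    ultimately have "\<rho> (\<phi> x - 0) \<le> 3 * \<theta> * \<tau>\<^sup>2 / (2 * (2 powr (r + 1) - \<tau> ^ 3)) * norm x powr r"
      for x by simp
    thus ?thesis
      using False modular_space_eq_UNIV by (intro ex1I[of _ "\<lambda>_. 0"]) (auto simp: quadratic_map_def)
  qed
qed

end
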